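(* For every $n\ge 1$ with $n\neq 3$, the fan $F_n$ is distance antimagic; the fan $F_3$ is not distance antimagic.
   Context: The fan $F_n$ is obtained from a path $x_1x_2\cdots x_n$ by adding a center vertex $x_0$ adjacent to all of $x_1,\dots,x_n$; it has $n+1$ vertices. For a graph $G=(V,E)$ with $v=|V|$ and a bijection $f:V\to\{1,\dots,v\}$, the vertex-weight of $x$ is $w(x)=\sum_{y\in N(x)}f(y)$ with $N(x)$ the set of neighbours of $x$. $G$ is distance antimagic if it admits a bijection $f$ under which all vertex-weights are pairwise distinct. *)

theory Defs
  imports Main
begin

(* A simple graph given by a finite vertex set V and a symmetric irreflexive
   adjacency relation adj. *)

definition nbhd :: "'a set \<Rightarrow> ('a \<Rightarrow> 'a \<Rightarrow> bool) \<Rightarrow> 'a \<Rightarrow> 'a set" where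
  "nbhd V adj x = {y \<in> V. adj x y}"

definition vertex_weight :: "'a set \<Rightarrow> ('a \<Rightarrow> 'a \<Rightarrow> bool) \<Rightarrow> ('a \<Rightarrow> nat) \<Rightarrow> 'a \<Rightarrow> nat" where
  "vertex_weight V adj f x = (\<Sum>y\<in>nbhd V adj x. f y)"

definition distance_antimagic :: "'a set \<Rightarrow> ('a \<Rightarrow> 'a \<Rightarrow> bool) \<Rightarrow> bool" where
  "distance_antimagic V adj \<longleftrightarrow>
     (\<exists>f. bij_betw f V {1..card V} \<and> inj_on (vertex_weight V adj f) V)"

definition fan_vertices :: "nat \<Rightarrow> nat set" where
  "fan_vertices n = {0..n}"

definition fan_adj :: "nat \<Rightarrow> nat \<Rightarrow> nat \<Rightarrow> bool" where
  "fan_adj n x y \<longleftrightarrow> x \<le> n \<and> y \<le> n \<and>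
     ((x = 0 \<and> 1 \<le> y) \<or> (y = 0 \<and> 1 \<le> x) \<or>
      (1 \<le> x \<and> 1 \<le> y \<and> (y = x + 1 \<or> x = y + 1)))"

end

theory Submission
  imports Defs
begin

text \<open>
  The end vertices \<open>x\<^sub>1\<close> and \<open>x\<^sub>3\<close> of \<open>F\<^sub>3\<close> have the same neighbourhood
  \<open>{x\<^sub>0, x\<^sub>2}\<close>, so no labelling separates their weights. For the other fans two
  explicit labellings work; a rim vertex has weight \<open>f x\<^sub>0\<close> plus the labels of
  its path neighbours. For even \<open>n\<close> (and \<open>n = 1\<close>) give the centre \<open>n + 1\<close> and
  \<open>x\<^sub>i\<close> the label \<open>i\<close>: the rim weights are \<open>n + 1 + 2i\<close> for \<open>i < n\<close>, all odd,
  and \<open>2n\<close> at the far end, even. For odd \<open>n \<ge> 5\<close> label \<open>x\<^sub>i\<close> by \<open>i + 1\<close>: the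
  inner rim weights \<open>2i + 3\<close> are odd, the end weights \<open>4\<close> and \<open>n + 1\<close> are even
  and distinct because \<open>n \<noteq> 3\<close>. In both cases the centre weight is quadratic
  in \<open>n\<close> while the rim weights are linear, which separates them except for a
  few small \<open>n\<close> checked directly.
\<close>

lemma not_distance_antimagic_if_same_nbhd:
  assumes "x \<in> V" "y \<in> V" "x \<noteq> y" "nbhd V adj x = nbhd V adj y"
  shows "\<not> distance_antimagic V adj"
proof
  assume "distance_antimagic V adj"
  then obtain f where "inj_on (vertex_weight V adj f) V"
    unfolding distance_antimagic_def by blast
  moreover have "vertex_weight V adj f x = vertex_weight V adj f y"
    using assms(4) by (simp add: vertex_weight_def)
  ultimately show False
    using assms(1-3) by (auto dest: inj_onD)
qed

abbreviation fan_weight :: "nat \<Rightarrow> (nat \<Rightarrow> nat) \<Rightarrow> nat \<Rightarrow> nat" where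
  "fan_weight n \<equiv> vertex_weight (fan_vertices n) (fan_adj n)"

lemma fan_weight_centre: "fan_weight n f 0 = (\<Sum>i = 1..n. f i)"
proof -
  have "nbhd (fan_vertices n) (fan_adj n) 0 = {1..n}"
    by (auto simp: nbhd_def fan_vertices_def fan_adj_def)
  then show ?thesis
    by (simp add: vertex_weight_def)
qed

lemma fan_weight_rim:
  assumes "1 \<le> i" "i \<le> n"
  shows "fan_weight n f i
    = f 0 + (if 2 \<le> i then f (i - 1) else 0) + (if i < n then f (i + 1) else 0)"
proof -
  have "nbhd (fan_vertices n) (fan_adj n) i
      = {0} \<union> {j. 2 \<le> i \<and> j = i - 1} \<union> {j. i < n \<and> j = i + 1}"
    using assms by (auto simp: nbhd_def fan_vertices_def fan_adj_def)
  then show ?thesis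
    using assms by (cases "2 \<le> i"; cases "i < n") (simp_all add: vertex_weight_def)
qed

lemma fan_distance_antimagicI:
  assumes "bij_betw f {0..n} {1..n + 1}"
    and "inj_on (fan_weight n f) {1..n}"
    and "\<And>i. i \<in> {1..n} \<Longrightarrow> fan_weight n f i \<noteq> fan_weight n f 0"
  shows "distance_antimagic (fan_vertices n) (fan_adj n)"
proof -
  have "inj_on (fan_weight n f) (insert 0 {1..n})"
    unfolding inj_on_insert using assms(2,3) by force
  moreover have "insert 0 {1..n} = fan_vertices n"
    by (auto simp: fan_vertices_def)
  ultimately have "inj_on (fan_weight n f) (fan_vertices n)"
    by metis
  moreover have "card (fan_vertices n) = n + 1"
    by (simp add: fan_vertices_def)
  ultimately show ?thesis
    using assms(1) unfolding distance_antimagic_def fan_vertices_def by auto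
qed

lemma fan_distance_antimagic_even_or_one:
  assumes "even n \<or> n = 1" "1 \<le> n"
  shows "distance_antimagic (fan_vertices n) (fan_adj n)"
proof (rule fan_distance_antimagicI)
  define f where "f v = (if v = 0 then n + 1 else v)" for v
  show "bij_betw f {0..n} {1..n + 1}"
    by (auto simp: bij_betw_def inj_on_def image_iff f_def)
  have rim: "fan_weight n f i = (if i = n then 2 * n else n + 1 + 2 * i)"
    if "i \<in> {1..n}" for i
    using that fan_weight_rim[of i n f] by (auto simp: f_def)
  show "inj_on (fan_weight n f) {1..n}"
  proof (rule inj_onI)
    fix i j assume i: "i \<in> {1..n}" and j: "j \<in> {1..n}"
      and "fan_weight n f i = fan_weight n f j"
    then show "i = j"
      using assms by (auto simp: rim split: if_split_asm)
  qed
  have centre: "2 * fan_weight n f 0 = n * (n + 1)"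
    using double_gauss_sum_from_Suc_0[of n, where ?'a = nat]
    by (simp add: fan_weight_centre f_def)
  show "fan_weight n f i \<noteq> fan_weight n f 0" if "i \<in> {1..n}" for i
  proof (cases "n \<le> 4")
    case True
    with assms have "n = 1 \<or> n = 2 \<or> n = 4" by presburger
    then have "2 * fan_weight n f i \<noteq> n * (n + 1)"
      unfolding rim[OF that] using that by (auto; presburger)
    then show ?thesis using centre by auto
  next
    case False
    with assms have "6 \<le> n" by presburger
    then have "7 * n \<le> 2 * fan_weight n f 0"
      unfolding centre by simp
    then show ?thesis using that rim[OF that] by simp
  qed
qed

lemma fan_distance_antimagic_odd_ge_5:
  assumes "odd n" "5 \<le> n"
  shows "distance_antimagic (fan_vertices n) (fan_adj n)"
proof (rule fan_distance_antimagicI)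
  show "bij_betw Suc {0..n} {1..n + 1}"
    by (simp add: bij_betw_def image_Suc_atLeastAtMost)
  have rim: "fan_weight n Suc i = (if i = 1 then 4 else if i = n then n + 1 else 2 * i + 3)"
    if "i \<in> {1..n}" for i
    using that assms fan_weight_rim[of i n Suc] by auto
  show "inj_on (fan_weight n Suc) {1..n}"
  proof (rule inj_onI)
    fix i j assume i: "i \<in> {1..n}" and j: "j \<in> {1..n}"
      and "fan_weight n Suc i = fan_weight n Suc j"
    then have "(if i = 1 then 4 else if i = n then n + 1 else 2 * i + 3)
             = (if j = 1 then 4 else if j = n then n + 1 else 2 * j + 3)"
      by (simp add: rim)
    then show "i = j"
      using assms by (auto split: if_split_asm; presburger)
  qed
  have "2 * fan_weight n Suc 0 = n * (n + 3)"
    using double_gauss_sum_from_Suc_0[of n, where ?'a = nat]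
    by (simp add: fan_weight_centre sum_Suc[of id, simplified] algebra_simps)
  then have "6 * n \<le> 2 * fan_weight n Suc 0"
    using assms by simp
  then show "fan_weight n Suc i \<noteq> fan_weight n Suc 0" if "i \<in> {1..n}" for i
    using that assms rim[OF that] by auto
qed

lemma not_distance_antimagic_fan_3: "\<not> distance_antimagic (fan_vertices 3) (fan_adj 3)"
proof (rule not_distance_antimagic_if_same_nbhd)
  show "nbhd (fan_vertices 3) (fan_adj 3) 1 = nbhd (fan_vertices 3) (fan_adj 3) 3"
    by (auto simp: nbhd_def fan_vertices_def fan_adj_def)
qed (simp_all add: fan_vertices_def)

theorem mainTheorem14:
  shows "(\<forall>n::nat. n \<ge> 1 \<and> n \<noteq> 3 \<longrightarrow> distance_antimagic (fan_vertices n) (fan_adj n))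
         \<and> \<not> distance_antimagic (fan_vertices 3) (fan_adj 3)"
proof (intro conjI allI impI)
  fix n :: nat
  assume "n \<ge> 1 \<and> n \<noteq> 3"
  then have "even n \<or> n = 1 \<or> odd n \<and> 5 \<le> n"
    by presburger
  then show "distance_antimagic (fan_vertices n) (fan_adj n)"
    using \<open>n \<ge> 1 \<and> n \<noteq> 3\<close> fan_distance_antimagic_even_or_one fan_distance_antimagic_odd_ge_5 by blast
qed (fact not_distance_antimagic_fan_3)

end
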